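(* Let $G\sim G(n,m)$ and fix $\delta\in(0,1)$; assume $1\le m\le(1-\delta)N$. Let $\mu=2m/n$ and let $\lambda=\lambda_n$ be real with $\lambda_n\to0$. Then, as $n\to\infty$, $$\sup_{k}\left|\frac{\mathbb E[e^{\lambda(d_1-\mu)}\mid d_2=k]}{\mathbb E[e^{\lambda(d_1-\mu)}]}-1\right|\to0,$$ where the supremum is over all $k\in\{0,1,\dots,n-1\}$ with $\mathbb P(d_2=k)>0$.
   Context: $N=\binom n2$; $G(n,m)$ is the uniform distribution over graphs on $[n]$ with exactly $m$ edges, $m=m(n)$. $d_i$ denotes the degree of vertex $i$. *)

theory Defs
  imports "HOL-Probability.Probability"
begin

text \<open>Vertex set [n] = {1..n}. A simple graph is a set of edges, each edge a 2-subset of [n].\<close>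

definition all_edges :: "nat \<Rightarrow> nat set set" where
  "all_edges n = {e. e \<subseteq> {1..n} \<and> card e = 2}"

definition NN :: "nat \<Rightarrow> nat" where
  "NN n = n choose 2"

definition graphs_nm :: "nat \<Rightarrow> nat \<Rightarrow> nat set set set" where
  "graphs_nm n m = {E. E \<subseteq> all_edges n \<and> card E = m}"

definition Gnm :: "nat \<Rightarrow> nat \<Rightarrow> nat set set pmf" where
  "Gnm n m = pmf_of_set (graphs_nm n m)"

definition deg :: "nat set set \<Rightarrow> nat \<Rightarrow> nat" where
  "deg E i = card {e \<in> E. i \<in> e}"

end

theory Submission
  imports Defs
begin

(* Write x = e^lambda, let Q be the set of edges at vertex 2, P the set of edges at vertex 1, and
   W the set of all other edges. Conditioned on d_2 = k, the edge set is a uniform k-subset of Q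
   together with an independent uniform (m - k)-subset of W, so E[x^d_1 | d_2 = k] = phi(k) h(m - k),
   where phi and h are generating functions of hypergeometric laws counting the edges that lie in P.
   Since Q meets P only in the edge 12, phi(k) lies between min(1, x) and max(1, x). Double counting
   pairs (subset, added edge) gives |h(j + 1) - h(j)| <= |x - 1| n / (N - n - m) h(j), and m - k and m - k'
   differ by at most n. So all conditional means agree up to a factor e^|lambda| / (1 - 4 |x - 1| / delta),
   which tends to 1, and the same holds for their average, the unconditional mean. *)

section \<open>Hypergeometric generating functions\<close>

definition k_subsets :: "'a set \<Rightarrow> nat \<Rightarrow> 'a set set" where
  "k_subsets W j = {B. B \<subseteq> W \<and> card B = j}"

definition hit_power_sum :: "'a set \<Rightarrow> 'a set \<Rightarrow> nat \<Rightarrow> real \<Rightarrow> real" where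
  "hit_power_sum W P j x = (\<Sum>B\<in>k_subsets W j. x ^ card (B \<inter> P))"

(* The probability generating function, at x, of the hypergeometric count card (B \<inter> P) for a
   uniformly random j-subset B of W; it is 0 when j > card W. *)
definition hypergeom_pgf :: "'a set \<Rightarrow> 'a set \<Rightarrow> nat \<Rightarrow> real \<Rightarrow> real" where
  "hypergeom_pgf W P j x = hit_power_sum W P j x / real (card W choose j)"

lemma finite_k_subsets: "finite W \<Longrightarrow> finite (k_subsets W j)"
  unfolding k_subsets_def by (rule finite_subset[of _ "Pow W"]) auto

lemma card_k_subsets: "finite W \<Longrightarrow> card (k_subsets W j) = card W choose j"
  unfolding k_subsets_def by (rule n_subsets)

lemma k_subsets_nonempty: "finite W \<Longrightarrow> j \<le> card W \<Longrightarrow> k_subsets W j \<noteq> {}"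
  using card_k_subsets[of W j] by auto

lemma sum_k_subsets_Suc_insert:
  fixes f :: "'a set \<Rightarrow> real"
  assumes "finite W"
  shows "(\<Sum>C\<in>k_subsets W (Suc j). real (Suc j) * f C) = (\<Sum>B\<in>k_subsets W j. \<Sum>e\<in>W - B. f (insert e B))"
proof -
  have fin: "finite C" if "C \<in> k_subsets W i" for C i
    using that assms by (auto simp: k_subsets_def intro: finite_subset)
  have "(\<Sum>C\<in>k_subsets W (Suc j). real (Suc j) * f C) = (\<Sum>C\<in>k_subsets W (Suc j). \<Sum>e\<in>C. f C)"
    by (intro sum.cong refl) (simp add: k_subsets_def)
  also have "\<dots> = (\<Sum>(C, e)\<in>Sigma (k_subsets W (Suc j)) (\<lambda>C. C). f C)"
    using fin by (intro sum.Sigma finite_k_subsets assms) auto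
  also have "\<dots> = (\<Sum>(B, e)\<in>Sigma (k_subsets W j) (\<lambda>B. W - B). f (insert e B))"
  proof (rule sum.reindex_bij_witness[where i = "\<lambda>(B, e). (insert e B, e)" and j = "\<lambda>(C, e). (C - {e}, e)"])
    fix a assume "a \<in> Sigma (k_subsets W (Suc j)) (\<lambda>C. C)"
    then obtain C e where a: "a = (C, e)" "C \<in> k_subsets W (Suc j)" "e \<in> C" by auto
    then show "(case case a of (C, e) \<Rightarrow> (C - {e}, e) of (B, e) \<Rightarrow> (insert e B, e)) = a"
      and "(case a of (C, e) \<Rightarrow> (C - {e}, e)) \<in> Sigma (k_subsets W j) (\<lambda>B. W - B)"
      and "(case case a of (C, e) \<Rightarrow> (C - {e}, e) of (B, e) \<Rightarrow> f (insert e B)) = (case a of (C, e) \<Rightarrow> f C)"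
      using fin[OF a(2)] by (auto simp: k_subsets_def insert_absorb)
  next
    fix a assume "a \<in> Sigma (k_subsets W j) (\<lambda>B. W - B)"
    then obtain B e where a: "a = (B, e)" "B \<in> k_subsets W j" "e \<in> W - B" by auto
    then show "(case case a of (B, e) \<Rightarrow> (insert e B, e) of (C, e) \<Rightarrow> (C - {e}, e)) = a"
      and "(case a of (B, e) \<Rightarrow> (insert e B, e)) \<in> Sigma (k_subsets W (Suc j)) (\<lambda>C. C)"
      using fin[OF a(2)] by (auto simp: k_subsets_def)
  qed
  also have "\<dots> = (\<Sum>B\<in>k_subsets W j. \<Sum>e\<in>W - B. f (insert e B))"
    using assms by (intro sum.Sigma[symmetric] finite_k_subsets) auto
  finally show ?thesis .
qed

lemma sum_power_card_insert_Int:
  fixes x :: real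
  assumes "finite A" "finite B" "B \<inter> A = {}"
  shows "(\<Sum>e\<in>A. x ^ card (insert e B \<inter> P)) = x ^ card (B \<inter> P) * (real (card A) + (x - 1) * real (card (A \<inter> P)))"
proof -
  have "x ^ card (insert e B \<inter> P) = x ^ card (B \<inter> P) * (1 + (x - 1) * of_bool (e \<in> P))" if "e \<in> A" for e
  proof (cases "e \<in> P")
    case True
    with that assms have "insert e B \<inter> P = insert e (B \<inter> P)" "e \<notin> B \<inter> P" by auto
    with True assms(2) show ?thesis by simp
  next
    case False
    then show ?thesis by simp
  qed
  then have "(\<Sum>e\<in>A. x ^ card (insert e B \<inter> P)) = x ^ card (B \<inter> P) * (\<Sum>e\<in>A. 1 + (x - 1) * of_bool (e \<in> P))"
    by (simp add: sum_distrib_left)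
  also have "\<dots> = x ^ card (B \<inter> P) * (real (card A) + (x - 1) * real (card (A \<inter> P)))"
    using assms(1) by (simp add: sum.distrib sum_distrib_left[symmetric] Int_def)
  finally show ?thesis .
qed

lemma hit_power_sum_Suc:
  assumes "finite W"
  shows "real (Suc j) * hit_power_sum W P (Suc j) x - real (card W - j) * hit_power_sum W P j x
    = (x - 1) * (\<Sum>B\<in>k_subsets W j. x ^ card (B \<inter> P) * real (card ((W - B) \<inter> P)))"
proof -
  have B: "finite B" "card (W - B) = card W - j" if "B \<in> k_subsets W j" for B
  proof -
    from that have "B \<subseteq> W" "card B = j" by (auto simp: k_subsets_def)
    moreover from this assms show "finite B" by (auto intro: finite_subset)
    ultimately show "card (W - B) = card W - j" by (simp add: card_Diff_subset)
  qed
  have "real (Suc j) * hit_power_sum W P (Suc j) x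
      = (\<Sum>B\<in>k_subsets W j. \<Sum>e\<in>W - B. x ^ card (insert e B \<inter> P))"
    unfolding hit_power_sum_def sum_distrib_left by (rule sum_k_subsets_Suc_insert[OF assms])
  also have "\<dots> = (\<Sum>B\<in>k_subsets W j. x ^ card (B \<inter> P) * (real (card W - j) + (x - 1) * real (card ((W - B) \<inter> P))))"
  proof (intro sum.cong refl)
    fix B assume "B \<in> k_subsets W j"
    then show "(\<Sum>e\<in>W - B. x ^ card (insert e B \<inter> P))
        = x ^ card (B \<inter> P) * (real (card W - j) + (x - 1) * real (card ((W - B) \<inter> P)))"
      using sum_power_card_insert_Int[of "W - B" B x P] B assms by simp
  qed
  finally show ?thesis
    by (simp add: hit_power_sum_def algebra_simps sum_distrib_left sum_subtractf[symmetric])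
qed

lemma hit_power_sum_nonneg: "0 \<le> x \<Longrightarrow> 0 \<le> hit_power_sum W P j x"
  unfolding hit_power_sum_def by (intro sum_nonneg) auto

lemma hypergeom_pgf_nonneg: "0 \<le> x \<Longrightarrow> 0 \<le> hypergeom_pgf W P j x"
  unfolding hypergeom_pgf_def by (simp add: hit_power_sum_nonneg)

lemma hypergeom_pgf_step:
  assumes W: "finite W" and x: "0 < x" and j: "j < card W"
  shows "\<bar>hypergeom_pgf W P (Suc j) x - hypergeom_pgf W P j x\<bar>
    \<le> \<bar>x - 1\<bar> * real (card (W \<inter> P)) / real (card W - j) * hypergeom_pgf W P j x"
proof -
  let ?S = "hit_power_sum W P" and ?C = "\<lambda>i. real (card W choose i)"
  have C: "real (Suc j) * ?C (Suc j) = real (card W - j) * ?C j"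
    using binomial_absorption[of j "card W"] binomial_absorb_comp[of "card W" j]
    by (metis of_nat_mult)
  have pos: "0 < ?C j" "0 < real (card W - j)" using j by auto
  have "\<bar>real (Suc j) * ?S (Suc j) x - real (card W - j) * ?S j x\<bar>
      = \<bar>x - 1\<bar> * (\<Sum>B\<in>k_subsets W j. x ^ card (B \<inter> P) * real (card ((W - B) \<inter> P)))"
    unfolding hit_power_sum_Suc[OF W] using x by (simp add: abs_mult sum_nonneg)
  also have "\<dots> \<le> \<bar>x - 1\<bar> * (\<Sum>B\<in>k_subsets W j. x ^ card (B \<inter> P) * real (card (W \<inter> P)))"
    using x W by (intro mult_left_mono sum_mono mult_left_mono) (auto intro: card_mono)
  also have "\<dots> = \<bar>x - 1\<bar> * real (card (W \<inter> P)) * ?S j x"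
    by (simp add: hit_power_sum_def sum_distrib_left sum_distrib_right mult_ac)
  finally have num: "\<bar>real (Suc j) * ?S (Suc j) x - real (card W - j) * ?S j x\<bar>
      \<le> \<bar>x - 1\<bar> * real (card (W \<inter> P)) * ?S j x" .
  have "hypergeom_pgf W P (Suc j) x = real (Suc j) * ?S (Suc j) x / (real (card W - j) * ?C j)"
    unfolding hypergeom_pgf_def C[symmetric] by simp
  moreover have "hypergeom_pgf W P j x = real (card W - j) * ?S j x / (real (card W - j) * ?C j)"
    unfolding hypergeom_pgf_def using pos by simp
  ultimately have "hypergeom_pgf W P (Suc j) x - hypergeom_pgf W P j x
      = (real (Suc j) * ?S (Suc j) x - real (card W - j) * ?S j x) / (real (card W - j) * ?C j)"
    by (simp add: diff_divide_distrib)
  then have "\<bar>hypergeom_pgf W P (Suc j) x - hypergeom_pgf W P j x\<bar>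
      \<le> \<bar>x - 1\<bar> * real (card (W \<inter> P)) * ?S j x / (real (card W - j) * ?C j)"
    using num pos by (simp add: abs_div divide_right_mono)
  also have "\<dots> = \<bar>x - 1\<bar> * real (card (W \<inter> P)) / real (card W - j) * hypergeom_pgf W P j x"
    by (simp add: hypergeom_pgf_def)
  finally show ?thesis .
qed

lemma hypergeom_pgf_bounds_if_hits_le_1:
  assumes "finite Q" "j \<le> card Q" and hits: "\<And>A. A \<subseteq> Q \<Longrightarrow> card (A \<inter> P) \<le> 1"
  shows "min 1 x \<le> hypergeom_pgf Q P j x \<and> hypergeom_pgf Q P j x \<le> max 1 x"
proof -
  have t: "min 1 x \<le> x ^ card (A \<inter> P) \<and> x ^ card (A \<inter> P) \<le> max 1 x" if "A \<in> k_subsets Q j" for A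
    using hits[of A] that by (auto simp: k_subsets_def le_Suc_eq)
  have C: "0 < real (card Q choose j)" using assms(2) by simp
  have "min 1 x * real (card Q choose j) \<le> hit_power_sum Q P j x"
    "hit_power_sum Q P j x \<le> max 1 x * real (card Q choose j)"
    unfolding hit_power_sum_def card_k_subsets[OF assms(1), symmetric]
    using sum_bounded_below[of "k_subsets Q j" "min 1 x"] sum_bounded_above[of "k_subsets Q j" _ "max 1 x"] t
    by (auto simp: mult.commute)
  then show ?thesis
    using C by (simp add: hypergeom_pgf_def divide_le_eq le_divide_eq)
qed

section \<open>Sequences with small relative increments\<close>

lemma relative_increments_power_bounds:
  fixes h :: "nat \<Rightarrow> real"
  assumes step: "\<And>i. j \<le> i \<Longrightarrow> i < j + d \<Longrightarrow> \<bar>h (Suc i) - h i\<bar> \<le> \<eta> * h i"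
    and "0 \<le> \<eta>" "\<eta> \<le> 1"
  shows "(1 - \<eta>) ^ d * h j \<le> h (j + d) \<and> h (j + d) \<le> (1 + \<eta>) ^ d * h j"
  using step
proof (induction d)
  case 0
  then show ?case by simp
next
  case (Suc d)
  then have IH: "(1 - \<eta>) ^ d * h j \<le> h (j + d)" "h (j + d) \<le> (1 + \<eta>) ^ d * h j"
    by auto
  have "\<bar>h (j + Suc d) - h (j + d)\<bar> \<le> \<eta> * h (j + d)"
    using Suc.prems by simp
  then have "(1 - \<eta>) * h (j + d) \<le> h (j + Suc d)" "h (j + Suc d) \<le> (1 + \<eta>) * h (j + d)"
    by (auto simp: algebra_simps abs_le_iff)
  moreover have "(1 - \<eta>) * ((1 - \<eta>) ^ d * h j) \<le> (1 - \<eta>) * h (j + d)"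
    "(1 + \<eta>) * h (j + d) \<le> (1 + \<eta>) * ((1 + \<eta>) ^ d * h j)"
    using IH assms(2,3) by (auto intro: mult_left_mono)
  ultimately show ?case by (simp add: mult.assoc)
qed

lemma relative_increments_ratio_bound:
  fixes h :: "nat \<Rightarrow> real"
  assumes step: "\<And>i. i < J \<Longrightarrow> \<bar>h (Suc i) - h i\<bar> \<le> \<eta> * h i"
    and nonneg: "\<And>i. 0 \<le> h i" and "0 \<le> \<eta>" "real d * \<eta> \<le> 1"
    and "a \<le> J" "b \<le> J" "a \<le> b + d" "b \<le> a + d"
  shows "(1 - real d * \<eta>) * h a \<le> h b"
proof (cases "a = b")
  case True
  have "0 \<le> real d * \<eta> * h b" using nonneg[of b] assms(3) by simp
  then show ?thesis using True by (simp add: left_diff_distrib)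
next
  case False
  define e where "e = (if a < b then b - a else a - b)"
  have e: "1 \<le> e" "real e \<le> real d" using False assms(7,8) by (auto simp: e_def)
  have "\<eta> \<le> real d * \<eta>"
    using mult_right_mono[of 1 "real d" \<eta>] e assms(3) by simp
  then have "\<eta> \<le> 1" using assms(4) by linarith
  have "1 - real d * \<eta> \<le> 1 - real e * \<eta>"
    using mult_right_mono[OF e(2) assms(3)] by linarith
  also have "\<dots> \<le> (1 - \<eta>) ^ e"
    using Bernoulli_inequality[of "- \<eta>" e] \<open>\<eta> \<le> 1\<close> by simp
  finally have Bernoulli: "1 - real d * \<eta> \<le> (1 - \<eta>) ^ e" .
  show ?thesis
  proof (cases "a < b")
    case True
    then have "(1 - \<eta>) ^ e * h a \<le> h b"
      using relative_increments_power_bounds[of a e h \<eta>] step assms(3,6) \<open>\<eta> \<le> 1\<close>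
      by (simp add: e_def)
    moreover have "(1 - real d * \<eta>) * h a \<le> (1 - \<eta>) ^ e * h a"
      using Bernoulli nonneg[of a] by (rule mult_right_mono)
    ultimately show ?thesis by linarith
  next
    case False
    then have "h a \<le> (1 + \<eta>) ^ e * h b"
      using relative_increments_power_bounds[of b e h \<eta>] step assms(3,5) \<open>\<eta> \<le> 1\<close> \<open>a \<noteq> b\<close>
      by (simp add: e_def)
    then have "(1 - real d * \<eta>) * h a \<le> (1 - real d * \<eta>) * ((1 + \<eta>) ^ e * h b)"
      using assms(4) by (intro mult_left_mono) auto
    also have "\<dots> \<le> (1 - \<eta>) ^ e * ((1 + \<eta>) ^ e * h b)"
      using Bernoulli nonneg[of b] assms(3) by (intro mult_right_mono) auto
    also have "\<dots> = (1 - \<eta>\<^sup>2) ^ e * h b"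
      by (simp add: power2_eq_square power_mult_distrib[symmetric] algebra_simps)
    also have "\<dots> \<le> h b"
      using \<open>\<eta> \<le> 1\<close> assms(3) nonneg[of b]
      by (intro mult_left_le_one_le power_le_one) (auto simp: power_le_one_iff abs_le_iff power2_eq_square mult_le_one)
    finally show ?thesis .
  qed
qed

section \<open>Uniform subsets classified by their intersection with a fixed set\<close>

lemma expectation_pmf_of_set_between_class_means:
  fixes w :: "'a \<Rightarrow> real" and f :: "'a \<Rightarrow> 'b"
  assumes S: "finite S" "S \<noteq> {}"
    and bounds: "\<And>y. y \<in> f ` S \<Longrightarrow>
      a \<le> measure_pmf.expectation (pmf_of_set {s \<in> S. f s = y}) w \<and>
      measure_pmf.expectation (pmf_of_set {s \<in> S. f s = y}) w \<le> b"
  shows "a \<le> measure_pmf.expectation (pmf_of_set S) w \<and> measure_pmf.expectation (pmf_of_set S) w \<le> b"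
proof -
  let ?cls = "\<lambda>y. {s \<in> S. f s = y}"
  have cls: "finite (?cls y)" "y \<in> f ` S \<Longrightarrow> ?cls y \<noteq> {}" for y
    using S by auto
  have sum_w: "(\<Sum>s\<in>S. w s) = (\<Sum>y\<in>f ` S. measure_pmf.expectation (pmf_of_set (?cls y)) w * real (card (?cls y)))"
    unfolding sum.image_gen[OF S(1), of w f] using cls by (intro sum.cong refl) (simp add: integral_pmf_of_set)
  have card_S: "real (card S) = (\<Sum>y\<in>f ` S. real (card (?cls y)))"
    using sum.image_gen[OF S(1), of "\<lambda>_. 1::real" f] by simp
  have "a * real (card (?cls y)) \<le> measure_pmf.expectation (pmf_of_set (?cls y)) w * real (card (?cls y))"
    "measure_pmf.expectation (pmf_of_set (?cls y)) w * real (card (?cls y)) \<le> b * real (card (?cls y))"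
    if "y \<in> f ` S" for y
    using bounds[OF that] by (auto intro: mult_right_mono)
  then have "a * real (card S) \<le> (\<Sum>s\<in>S. w s)" "(\<Sum>s\<in>S. w s) \<le> b * real (card S)"
    unfolding sum_w card_S sum_distrib_left by (auto intro: sum_mono)
  then show ?thesis
    using S by (simp add: integral_pmf_of_set divide_le_eq le_divide_eq card_gt_0_iff)
qed

lemma abs_divide_minus_one_le:
  fixes a b c :: real
  assumes "0 < c" "c \<le> 1" "0 < a" "c * a \<le> b" "c * b \<le> a"
  shows "\<bar>a / b - 1\<bar> \<le> 1 / c - 1"
proof -
  have "0 < b" using mult_pos_pos[OF assms(1,3)] assms(4) by linarith
  then have "c \<le> a / b" "a / b \<le> 1 / c"
    using assms by (simp_all add: field_simps)
  moreover have "2 - 1 / c \<le> c"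
    using assms(1) zero_le_power2[of "c - 1"] by (simp add: field_simps power2_eq_square)
  ultimately show ?thesis by (simp add: abs_le_iff)
qed

lemma bij_betw_Int_Diff_k_subsets:
  assumes "finite U" "Q \<subseteq> U" "k \<le> m"
  shows "bij_betw (\<lambda>E. (E \<inter> Q, E - Q)) {E \<in> k_subsets U m. card (E \<inter> Q) = k}
    (k_subsets Q k \<times> k_subsets (U - Q) (m - k))"
proof (rule bij_betw_byWitness[where f' = "\<lambda>(A, B). A \<union> B"], goal_cases)
  case 1
  show ?case by auto
next
  case 2
  show ?case by (auto simp: k_subsets_def)
next
  case 3
  have "E \<inter> Q \<in> k_subsets Q k \<and> E - Q \<in> k_subsets (U - Q) (m - k)"
    if "E \<in> k_subsets U m" "card (E \<inter> Q) = k" for E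
  proof -
    from that assms(1) have "finite E" by (auto simp: k_subsets_def intro: finite_subset)
    with that show ?thesis
      using card_Int_Diff[of E Q] by (auto simp: k_subsets_def)
  qed
  then show ?case by auto
next
  case 4
  have "A \<union> B \<in> k_subsets U m \<and> card ((A \<union> B) \<inter> Q) = k"
    if A: "A \<in> k_subsets Q k" and B: "B \<in> k_subsets (U - Q) (m - k)" for A B
  proof -
    from A B assms(1,2) have "finite A" "finite B" "A \<inter> B = {}" "(A \<union> B) \<inter> Q = A"
      by (auto simp: k_subsets_def intro: finite_subset)
    with A B assms(2,3) show ?thesis
      by (auto simp: k_subsets_def card_Un_disjoint)
  qed
  then show ?case by auto
qed

lemma class_mean_eq_hypergeom_pgf_product:
  assumes "finite U" "Q \<subseteq> U" "k \<le> m" and ne: "{E \<in> k_subsets U m. card (E \<inter> Q) = k} \<noteq> {}"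
  shows "measure_pmf.expectation (pmf_of_set {E \<in> k_subsets U m. card (E \<inter> Q) = k}) (\<lambda>E. x ^ card (E \<inter> P))
    = hypergeom_pgf Q P k x * hypergeom_pgf (U - Q) P (m - k) x"
proof -
  let ?cls = "{E \<in> k_subsets U m. card (E \<inter> Q) = k}"
  note bij = bij_betw_Int_Diff_k_subsets[OF assms(1-3)]
  have fin: "finite Q" "finite (U - Q)" using assms(1,2) finite_subset by auto
  have "(\<Sum>E\<in>?cls. x ^ card (E \<inter> P)) = (\<Sum>(A, B)\<in>k_subsets Q k \<times> k_subsets (U - Q) (m - k). x ^ card (A \<inter> P) * x ^ card (B \<inter> P))"
  proof (subst sum.reindex_bij_betw[OF bij, symmetric], intro sum.cong refl)
    fix E assume "E \<in> ?cls"
    then have "finite E" using assms(1) by (auto simp: k_subsets_def intro: finite_subset)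
    then have "card (E \<inter> P) = card (E \<inter> Q \<inter> P) + card ((E - Q) \<inter> P)"
      by (subst card_Un_disjoint[symmetric]) (auto intro: arg_cong[where f = card])
    then show "x ^ card (E \<inter> P) = (case (E \<inter> Q, E - Q) of (A, B) \<Rightarrow> x ^ card (A \<inter> P) * x ^ card (B \<inter> P))"
      by (simp add: power_add)
  qed
  also have "\<dots> = hit_power_sum Q P k x * hit_power_sum (U - Q) P (m - k) x"
    by (simp add: hit_power_sum_def sum_product sum.cartesian_product)
  finally have "(\<Sum>E\<in>?cls. x ^ card (E \<inter> P)) = hit_power_sum Q P k x * hit_power_sum (U - Q) P (m - k) x" .
  moreover have "real (card ?cls) = real (card Q choose k) * real (card (U - Q) choose (m - k))"
    using bij_betw_same_card[OF bij] fin by (simp add: card_cartesian_product card_k_subsets)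
  moreover have "finite ?cls" using finite_k_subsets[OF assms(1)] by simp
  ultimately show ?thesis
    using ne by (simp add: integral_pmf_of_set[OF ne] hypergeom_pgf_def)
qed

lemma hypergeom_pgf_relative_step:
  assumes W: "finite W" and x: "0 < x" and r: "card (W \<inter> P) \<le> r"
    and D: "0 < D" "D \<le> real (card W) - real m" and i: "i < m"
  shows "\<bar>hypergeom_pgf W P (Suc i) x - hypergeom_pgf W P i x\<bar> \<le> real r * \<bar>x - 1\<bar> / D * hypergeom_pgf W P i x"
proof -
  have gap: "D < real (card W - i)" using D i by (simp add: of_nat_diff)
  have "\<bar>hypergeom_pgf W P (Suc i) x - hypergeom_pgf W P i x\<bar>
      \<le> \<bar>x - 1\<bar> * real (card (W \<inter> P)) / real (card W - i) * hypergeom_pgf W P i x"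
    using W x gap D(1) by (intro hypergeom_pgf_step) auto
  also have "\<dots> \<le> real r * \<bar>x - 1\<bar> / D * hypergeom_pgf W P i x"
  proof -
    have "\<bar>x - 1\<bar> * real (card (W \<inter> P)) \<le> real r * \<bar>x - 1\<bar>"
      using r by (simp add: mult.commute[of "real r"] mult_left_mono)
    then show ?thesis
      using gap D(1) x by (intro mult_right_mono frac_le) (auto simp: hypergeom_pgf_nonneg)
  qed
  finally show ?thesis .
qed

lemma hypergeom_pgf_ratio_bound:
  assumes W: "finite W" and x: "0 < x" and r: "card (W \<inter> P) \<le> r"
    and D: "0 < D" "D \<le> real (card W) - real m"
    and z: "real r * real r * \<bar>x - 1\<bar> / D \<le> z" "z \<le> 1"
    and ab: "a \<le> m" "b \<le> m" "a \<le> b + r" "b \<le> a + r"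
  shows "(1 - z) * hypergeom_pgf W P a x \<le> hypergeom_pgf W P b x"
proof -
  let ?\<eta> = "real r * \<bar>x - 1\<bar> / D"
  have r\<eta>: "real r * ?\<eta> \<le> z" using z(1) by simp
  have "(1 - z) * hypergeom_pgf W P a x \<le> (1 - real r * ?\<eta>) * hypergeom_pgf W P a x"
    using r\<eta> x by (intro mult_right_mono) (auto simp: hypergeom_pgf_nonneg)
  also have "\<dots> \<le> hypergeom_pgf W P b x"
  proof (intro relative_increments_ratio_bound[where J = m] hypergeom_pgf_relative_step W x r D)
    show "0 \<le> ?\<eta>" using D(1) by simp
    show "real r * ?\<eta> \<le> 1" using r\<eta> z(2) by linarith
  qed (use ab x D in \<open>auto simp: hypergeom_pgf_nonneg\<close>)
  finally show ?thesis .
qed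

lemma class_means_comparable:
  fixes U Q P :: "'a set" and x z D :: real and m r k k' :: nat
  defines "g \<equiv> \<lambda>k. measure_pmf.expectation (pmf_of_set {E \<in> k_subsets U m. card (E \<inter> Q) = k})
    (\<lambda>E. x ^ card (E \<inter> P))"
  assumes U: "finite U" "Q \<subseteq> U" and hits: "\<And>A. A \<subseteq> Q \<Longrightarrow> card (A \<inter> P) \<le> 1"
    and r: "card Q \<le> r" "card ((U - Q) \<inter> P) \<le> r"
    and D: "0 < D" "D \<le> real (card U) - real (card Q) - real m"
    and z: "real r * real r * \<bar>x - 1\<bar> / D \<le> z" "z \<le> 1" and x: "0 < x"
    and ne: "{E \<in> k_subsets U m. card (E \<inter> Q) = k} \<noteq> {}" "{E \<in> k_subsets U m. card (E \<inter> Q) = k'} \<noteq> {}"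
  shows "min 1 x * (1 - z) / max 1 x * g k \<le> g k'"
proof -
  define h where "h j = hypergeom_pgf (U - Q) P j x" for j
  have k: "i \<le> m" "i \<le> r" "i \<le> card Q" if "{E \<in> k_subsets U m. card (E \<inter> Q) = i} \<noteq> {}" for i
  proof -
    from that obtain E where E: "E \<subseteq> U" "card E = m" "card (E \<inter> Q) = i"
      by (auto simp: k_subsets_def)
    then have "finite E" "finite Q" using U finite_subset by auto
    with E r(1) show "i \<le> m" "i \<le> r" "i \<le> card Q"
      using card_mono[of E "E \<inter> Q"] card_mono[of Q "E \<inter> Q"] by auto
  qed
  have g: "g i = hypergeom_pgf Q P i x * h (m - i)"
    if "{E \<in> k_subsets U m. card (E \<inter> Q) = i} \<noteq> {}" for i
    unfolding g_def h_def using class_mean_eq_hypergeom_pgf_product[OF U k(1)[OF that] that] .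
  have pgf_Q: "min 1 x \<le> hypergeom_pgf Q P i x \<and> hypergeom_pgf Q P i x \<le> max 1 x"
    if "{E \<in> k_subsets U m. card (E \<inter> Q) = i} \<noteq> {}" for i
    using U hits k(3)[OF that] by (intro hypergeom_pgf_bounds_if_hits_le_1) (auto intro: finite_subset)
  have h_nonneg: "0 \<le> h j" for j
    unfolding h_def using x by (simp add: hypergeom_pgf_nonneg)
  have "real (card (U - Q)) = real (card U) - real (card Q)"
    using U by (simp add: card_Diff_subset of_nat_diff card_mono finite_subset)
  then have h_ratio: "(1 - z) * h (m - k) \<le> h (m - k')"
    unfolding h_def using U r(2) D z x k[OF ne(1)] k[OF ne(2)]
    by (intro hypergeom_pgf_ratio_bound[where r = r and D = D]) auto
  have "min 1 x * (1 - z) / max 1 x * g k \<le> min 1 x * (1 - z) / max 1 x * (max 1 x * h (m - k))"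
    unfolding g[OF ne(1)] using pgf_Q[OF ne(1)] h_nonneg x z(2)
    by (intro mult_left_mono mult_right_mono) auto
  also have "\<dots> = min 1 x * ((1 - z) * h (m - k))" using x by simp
  also have "\<dots> \<le> min 1 x * h (m - k')" using h_ratio x by (intro mult_left_mono) auto
  also have "\<dots> \<le> g k'"
    unfolding g[OF ne(2)] using pgf_Q[OF ne(2)] h_nonneg by (intro mult_right_mono) auto
  finally show ?thesis .
qed

lemma class_mean_relative_error:
  fixes U Q P :: "'a set" and x z D :: real and m r k :: nat
  assumes U: "finite U" "Q \<subseteq> U" and hits: "\<And>A. A \<subseteq> Q \<Longrightarrow> card (A \<inter> P) \<le> 1"
    and r: "card Q \<le> r" "card ((U - Q) \<inter> P) \<le> r"
    and D: "0 < D" "D \<le> real (card U) - real (card Q) - real m"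
    and z: "real r * real r * \<bar>x - 1\<bar> / D \<le> z" "z < 1" and x: "0 < x"
    and ne: "{E \<in> k_subsets U m. card (E \<inter> Q) = k} \<noteq> {}"
  shows "\<bar>measure_pmf.expectation (pmf_of_set {E \<in> k_subsets U m. card (E \<inter> Q) = k}) (\<lambda>E. x ^ card (E \<inter> P))
      / measure_pmf.expectation (pmf_of_set (k_subsets U m)) (\<lambda>E. x ^ card (E \<inter> P)) - 1\<bar>
    \<le> max 1 x / (min 1 x * (1 - z)) - 1"
proof -
  define g where "g k = measure_pmf.expectation (pmf_of_set {E \<in> k_subsets U m. card (E \<inter> Q) = k})
    (\<lambda>E. x ^ card (E \<inter> P))" for k
  define c where "c = min 1 x * (1 - z) / max 1 x"
  have "0 \<le> z"
    using z(1) D(1) by (meson abs_ge_zero divide_nonneg_pos mult_nonneg_nonneg of_nat_0_le_iff order_trans)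
  have "min 1 x * (1 - z) \<le> min 1 x"
    using \<open>0 \<le> z\<close> x by (intro mult_left_le) auto
  also have "\<dots> \<le> max 1 x" by auto
  finally have c: "0 < c" "c \<le> 1"
    using x z(2) by (simp_all add: c_def)
  have S: "finite (k_subsets U m)" "k_subsets U m \<noteq> {}"
    using finite_k_subsets[OF U(1)] ne by auto
  have cmp: "c * g k \<le> g k' \<and> g k' \<le> g k / c"
    if "k' \<in> (\<lambda>E. card (E \<inter> Q)) ` k_subsets U m" for k'
  proof -
    from that have ne': "{E \<in> k_subsets U m. card (E \<inter> Q) = k'} \<noteq> {}" by auto
    have "c * g k \<le> g k'" "c * g k' \<le> g k"
      unfolding c_def g_def using z x
      by (intro class_means_comparable[OF U hits r D] ne ne'; simp)+
    with c show ?thesis by (simp add: le_divide_eq mult.commute)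
  qed
  have avg: "c * g k \<le> measure_pmf.expectation (pmf_of_set (k_subsets U m)) (\<lambda>E. x ^ card (E \<inter> P))
      \<and> measure_pmf.expectation (pmf_of_set (k_subsets U m)) (\<lambda>E. x ^ card (E \<inter> P)) \<le> g k / c"
    using expectation_pmf_of_set_between_class_means[OF S, where f = "\<lambda>E. card (E \<inter> Q)" and a = "c * g k" and b = "g k / c"] cmp
    unfolding g_def by blast
  have fin: "finite {E \<in> k_subsets U m. card (E \<inter> Q) = k}"
    using S(1) by simp
  have "0 < g k"
    unfolding g_def integral_pmf_of_set[OF ne fin] using ne fin x
    by (intro divide_pos_pos sum_pos) (auto simp: card_gt_0_iff)
  then have "\<bar>g k / measure_pmf.expectation (pmf_of_set (k_subsets U m)) (\<lambda>E. x ^ card (E \<inter> P)) - 1\<bar> \<le> 1 / c - 1"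
    using c avg by (intro abs_divide_minus_one_le) (auto simp: le_divide_eq mult.commute)
  then show ?thesis
    unfolding g_def c_def by simp
qed

section \<open>Degrees in G(n, m)\<close>

definition edges_at :: "nat \<Rightarrow> nat \<Rightarrow> nat set set" where
  "edges_at n v = {e \<in> all_edges n. v \<in> e}"

lemma finite_all_edges: "finite (all_edges n)"
  unfolding all_edges_def by (rule finite_subset[of _ "Pow {1..n}"]) auto

lemma card_all_edges: "card (all_edges n) = NN n"
  unfolding all_edges_def NN_def using n_subsets[of "{1..n}" 2] by simp

lemma graphs_nm_eq_k_subsets: "graphs_nm n m = k_subsets (all_edges n) m"
  by (simp add: graphs_nm_def k_subsets_def)

lemma deg_eq_card_Int: "deg E v = card (E \<inter> {e. v \<in> e})"
  unfolding deg_def by (simp add: Int_def)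

lemma card_edges_at: "v \<in> {1..n} \<Longrightarrow> card (edges_at n v) \<le> n - 1"
proof -
  assume v: "v \<in> {1..n}"
  have "edges_at n v \<subseteq> (\<lambda>i. {v, i}) ` ({1..n} - {v})"
  proof
    fix e assume "e \<in> edges_at n v"
    then obtain a b where "e = {a, b}" "a \<noteq> b" "e \<subseteq> {1..n}" "v \<in> e"
      by (auto simp: edges_at_def all_edges_def card_2_iff)
    then show "e \<in> (\<lambda>i. {v, i}) ` ({1..n} - {v})" by auto
  qed
  then have "card (edges_at n v) \<le> card ((\<lambda>i. {v, i}) ` ({1..n} - {v}))"
    by (intro card_mono) auto
  also have "\<dots> \<le> n - 1"
    using card_image_le[of "{1..n} - {v}" "\<lambda>i. {v, i}"] v by simp
  finally show ?thesis .
qed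

lemma deg_le:
  assumes "E \<subseteq> all_edges n" "v \<in> {1..n}"
  shows "deg E v \<le> n - 1"
proof -
  have "card (E \<inter> {e. v \<in> e}) \<le> card (edges_at n v)"
    using assms(1) by (intro card_mono) (auto simp: edges_at_def finite_all_edges)
  then show ?thesis
    using card_edges_at[OF assms(2)] by (simp add: deg_eq_card_Int)
qed

lemma card_Int_edges_at_le_1:
  assumes "v \<noteq> w" "A \<subseteq> edges_at n v"
  shows "card (A \<inter> {e. w \<in> e}) \<le> 1"
proof -
  have "A \<inter> {e. w \<in> e} \<subseteq> {{v, w}}"
  proof
    fix e assume "e \<in> A \<inter> {e. w \<in> e}"
    then obtain a b where "e = {a, b}" "a \<noteq> b" "v \<in> e" "w \<in> e"
      using assms(2) by (auto simp: edges_at_def all_edges_def card_2_iff)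
    then show "e \<in> {{v, w}}" using assms(1) by auto
  qed
  then show ?thesis
    using card_mono[of "{{v, w}}"] by fastforce
qed

lemma cond_pmf_pmf_of_set:
  assumes "finite S" "S \<inter> A \<noteq> {}"
  shows "cond_pmf (pmf_of_set S) A = pmf_of_set (S \<inter> A)"
proof (rule pmf_eqI)
  fix E
  have "S \<noteq> {}" using assms(2) by auto
  with assms have "set_pmf (pmf_of_set S) \<inter> A \<noteq> {}" by simp
  with assms \<open>S \<noteq> {}\<close> show "pmf (cond_pmf (pmf_of_set S) A) E = pmf (pmf_of_set (S \<inter> A)) E"
    by (simp add: pmf_cond measure_pmf_of_set indicator_def card_gt_0_iff)
qed

lemma real_NN: "2 * real (NN n) = real n * (real n - 1)"
proof (cases n)
  case (Suc k)
  have "2 * (n choose 2) = n * (n - 1)"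
    unfolding choose_two by (simp add: Suc)
  then have "2 * real (n choose 2) = real n * real (n - 1)"
    by (metis of_nat_mult of_nat_numeral)
  then show ?thesis using Suc by (simp add: NN_def)
qed (simp add: NN_def)

lemma edge_count_slack:
  fixes \<delta> :: real
  assumes "0 < \<delta>" "2 + 4 / \<delta> \<le> real n" "real m \<le> (1 - \<delta>) * real (NN n)"
  shows "\<delta> * (real n)\<^sup>2 / 4 \<le> real (NN n) - real n - real m"
proof -
  have "2 * \<delta> + 4 \<le> \<delta> * real n"
    using mult_left_mono[OF assms(2), of \<delta>] assms(1) by (simp add: distrib_left)
  then have "0 \<le> real n * (\<delta> * real n - 2 * \<delta> - 4)" by simp
  then have "\<delta> * (real n)\<^sup>2 \<le> 2 * \<delta> * (real n * (real n - 1)) - 4 * real n"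
    by (simp add: algebra_simps power2_eq_square)
  moreover have "\<delta> * (2 * real (NN n)) = \<delta> * (real n * (real n - 1))"
    using real_NN[of n] by simp
  ultimately show ?thesis
    using assms(3) by (simp add: algebra_simps)
qed

lemma max_divide_min_exp: "max 1 (exp l) / min 1 (exp l) = exp \<bar>l :: real\<bar>"
proof (cases "0 \<le> l")
  case True
  then have "1 \<le> exp l" using exp_ge_add_one_self[of l] by linarith
  with True show ?thesis by (simp add: max_def min_def)
next
  case False
  then have "exp l \<le> 1" by simp
  with False show ?thesis by (simp add: max_def min_def exp_minus field_simps)
qed

lemma graphs_nm_nonempty: "m \<le> NN n \<Longrightarrow> graphs_nm n m \<noteq> {}"
  by (simp add: graphs_nm_eq_k_subsets k_subsets_nonempty finite_all_edges card_all_edges)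

lemma le_NN_if_le_fraction:
  fixes \<delta> :: real
  assumes "0 < \<delta>" "real m \<le> (1 - \<delta>) * real (NN n)"
  shows "m \<le> NN n"
proof -
  have "0 \<le> \<delta> * real (NN n)" using assms(1) by simp
  with assms(2) have "real m \<le> real (NN n)" by (simp add: left_diff_distrib)
  then show ?thesis by simp
qed

lemma exp_mult_deg_diff: "exp (l * (real (deg E v) - \<mu>)) = exp (- l * \<mu>) * exp l ^ card (E \<inter> {e. v \<in> e})"
proof -
  have "exp (l * (real (deg E v) - \<mu>)) = exp (- l * \<mu>) * exp (real (deg E v) * l)"
    by (simp add: algebra_simps flip: exp_add)
  then show ?thesis by (simp add: deg_eq_card_Int exp_of_nat_mult)
qed

lemma cond_pmf_Gnm_deg:
  assumes "m \<le> NN n" and k: "0 < measure_pmf.prob (Gnm n m) {E. deg E v = k}"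
  shows "cond_pmf (Gnm n m) {E. deg E v = k}
      = pmf_of_set {E \<in> k_subsets (all_edges n) m. card (E \<inter> edges_at n v) = k}"
    and "{E \<in> k_subsets (all_edges n) m. card (E \<inter> edges_at n v) = k} \<noteq> {}"
proof -
  let ?S = "k_subsets (all_edges n) m"
  have S: "finite ?S" "?S \<noteq> {}"
    using graphs_nm_nonempty[OF assms(1)] by (simp_all add: graphs_nm_eq_k_subsets finite_k_subsets finite_all_edges)
  have "E \<inter> {e. v \<in> e} = E \<inter> edges_at n v" if "E \<subseteq> all_edges n" for E
    using that by (auto simp: edges_at_def)
  then have cls: "?S \<inter> {E. deg E v = k} = {E \<in> ?S. card (E \<inter> edges_at n v) = k}"
    by (auto simp: k_subsets_def deg_eq_card_Int)
  have "?S \<inter> {E. deg E v = k} \<noteq> {}"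
    using k S by (auto simp: Gnm_def graphs_nm_eq_k_subsets measure_pmf_of_set)
  then show "cond_pmf (Gnm n m) {E. deg E v = k} = pmf_of_set {E \<in> ?S. card (E \<inter> edges_at n v) = k}"
    and "{E \<in> ?S. card (E \<inter> edges_at n v) = k} \<noteq> {}"
    using cond_pmf_pmf_of_set[OF S(1)] by (simp_all add: Gnm_def graphs_nm_eq_k_subsets cls)
qed

lemma Gnm_cond_mgf_relative_error:
  fixes \<delta> l \<mu> :: real and n m k :: nat
  assumes \<delta>: "0 < \<delta>" and n: "2 + 4 / \<delta> \<le> real n" and m: "real m \<le> (1 - \<delta>) * real (NN n)"
    and z: "4 / \<delta> * \<bar>exp l - 1\<bar> < 1"
    and k: "0 < measure_pmf.prob (Gnm n m) {E. deg E 2 = k}"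
  shows "\<bar>measure_pmf.expectation (cond_pmf (Gnm n m) {E. deg E 2 = k}) (\<lambda>E. exp (l * (real (deg E 1) - \<mu>)))
      / measure_pmf.expectation (Gnm n m) (\<lambda>E. exp (l * (real (deg E 1) - \<mu>))) - 1\<bar>
    \<le> exp \<bar>l\<bar> / (1 - 4 / \<delta> * \<bar>exp l - 1\<bar>) - 1"
proof -
  define U where "U = all_edges n"
  define Q where "Q = edges_at n 2"
  define P where "P = {e :: nat set. 1 \<in> e}"
  have "0 < 4 / \<delta>" using \<delta> by simp
  with n have "2 \<le> n" by linarith
  have U: "finite U" "Q \<subseteq> U" "card U = NN n"
    by (auto simp: U_def Q_def edges_at_def finite_all_edges card_all_edges)
  have cardQ: "card Q \<le> n - 1" using card_edges_at[of 2 n] \<open>2 \<le> n\<close> by (simp add: Q_def)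
  have "card ((U - Q) \<inter> P) \<le> card (edges_at n 1)"
    by (intro card_mono) (auto simp: U_def P_def edges_at_def finite_all_edges)
  also have "\<dots> \<le> n - 1" using \<open>2 \<le> n\<close> by (intro card_edges_at) auto
  finally have cardWP: "card ((U - Q) \<inter> P) \<le> n" by simp
  have hits: "card (A \<inter> P) \<le> 1" if "A \<subseteq> Q" for A
    using card_Int_edges_at_le_1[of 2 1 A n] that by (simp add: Q_def P_def)
  have slack: "\<delta> * (real n)\<^sup>2 / 4 \<le> real (card U) - real (card Q) - real m"
    using edge_count_slack[OF \<delta> n m] cardQ U(3) by linarith
  have "0 < \<delta> * (real n)\<^sup>2 / 4" using \<delta> \<open>2 \<le> n\<close> by simp
  have z_eq: "real n * real n * \<bar>exp l - 1\<bar> / (\<delta> * (real n)\<^sup>2 / 4) = 4 / \<delta> * \<bar>exp l - 1\<bar>"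
    using \<open>2 \<le> n\<close> \<delta> by (simp add: power2_eq_square field_simps)
  have "max 1 (exp l) / (min 1 (exp l) * (1 - 4 / \<delta> * \<bar>exp l - 1\<bar>))
      = exp \<bar>l\<bar> / (1 - 4 / \<delta> * \<bar>exp l - 1\<bar>)"
    by (simp flip: max_divide_min_exp divide_divide_eq_left)
  moreover note cond = cond_pmf_Gnm_deg[OF le_NN_if_le_fraction[OF \<delta> m] k]
  ultimately have "\<bar>measure_pmf.expectation (cond_pmf (Gnm n m) {E. deg E 2 = k}) (\<lambda>E. exp l ^ card (E \<inter> P))
      / measure_pmf.expectation (pmf_of_set (k_subsets U m)) (\<lambda>E. exp l ^ card (E \<inter> P)) - 1\<bar>
    \<le> exp \<bar>l\<bar> / (1 - 4 / \<delta> * \<bar>exp l - 1\<bar>) - 1"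
    using class_mean_relative_error[OF U(1,2) hits _ cardWP \<open>0 < \<delta> * (real n)\<^sup>2 / 4\<close> slack,
        where x = "exp l" and z = "4 / \<delta> * \<bar>exp l - 1\<bar>" and k = k] cardQ z z_eq
    by (simp add: U_def Q_def)
  then show ?thesis
    unfolding exp_mult_deg_diff Gnm_def graphs_nm_eq_k_subsets integral_mult_right_zero
    by (simp add: U_def P_def)
qed
lemma Gnm_SUP_cond_mgf_relative_error:
  fixes \<delta> l \<mu> :: real and n m :: nat
  assumes \<delta>: "0 < \<delta>" and n: "2 + 4 / \<delta> \<le> real n" and m: "real m \<le> (1 - \<delta>) * real (NN n)"
    and z: "4 / \<delta> * \<bar>exp l - 1\<bar> < 1"
  defines "F \<equiv> \<lambda>k. \<bar>measure_pmf.expectation (cond_pmf (Gnm n m) {E. deg E 2 = k}) (\<lambda>E. exp (l * (real (deg E 1) - \<mu>)))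
      / measure_pmf.expectation (Gnm n m) (\<lambda>E. exp (l * (real (deg E 1) - \<mu>))) - 1\<bar>"
  shows "0 \<le> (SUP k \<in> {k. k \<le> n - 1 \<and> measure_pmf.prob (Gnm n m) {E. deg E 2 = k} > 0}. F k)
    \<and> (SUP k \<in> {k. k \<le> n - 1 \<and> measure_pmf.prob (Gnm n m) {E. deg E 2 = k} > 0}. F k)
      \<le> exp \<bar>l\<bar> / (1 - 4 / \<delta> * \<bar>exp l - 1\<bar>) - 1"
proof -
  define K where "K = {k. k \<le> n - 1 \<and> measure_pmf.prob (Gnm n m) {E. deg E 2 = k} > 0}"
  obtain E where E: "E \<in> graphs_nm n m"
    using graphs_nm_nonempty[OF le_NN_if_le_fraction[OF \<delta> m]] by blast
  have "0 < 4 / \<delta>" using \<delta> by simp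
  with n have "2 \<le> n" by linarith
  have "deg E 2 \<le> n - 1"
    using E \<open>2 \<le> n\<close> by (intro deg_le) (auto simp: graphs_nm_def)
  moreover have "E \<in> set_pmf (Gnm n m)"
  proof -
    have "graphs_nm n m \<noteq> {}" "finite (graphs_nm n m)"
      using E finite_k_subsets[OF finite_all_edges] by (auto simp: graphs_nm_eq_k_subsets)
    then show ?thesis using E by (simp add: Gnm_def)
  qed
  then have "0 < measure_pmf.prob (Gnm n m) {E'. deg E' 2 = deg E 2}"
    by (rule measure_pmf_posI) simp
  ultimately have k: "deg E 2 \<in> K" by (simp add: K_def)
  have "finite K" by (rule finite_subset[of _ "{..n - 1}"]) (auto simp: K_def)
  have "(SUP k \<in> K. F k) \<le> exp \<bar>l\<bar> / (1 - 4 / \<delta> * \<bar>exp l - 1\<bar>) - 1"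
  proof (rule cSUP_least)
    show "K \<noteq> {}" using k by blast
    show "F k \<le> exp \<bar>l\<bar> / (1 - 4 / \<delta> * \<bar>exp l - 1\<bar>) - 1" if "k \<in> K" for k
      unfolding F_def using Gnm_cond_mgf_relative_error[OF \<delta> n m z] that by (simp add: K_def)
  qed
  moreover have "0 \<le> (SUP k \<in> K. F k)"
    using cSUP_upper[OF k bdd_above_finite[OF finite_imageI[OF \<open>finite K\<close>]], of F]
    by (simp add: F_def order_trans[OF abs_ge_zero])
  ultimately show ?thesis unfolding K_def by simp
qed

theorem mainTheorem16:
  fixes \<delta> :: real and m :: "nat \<Rightarrow> nat" and lam :: "nat \<Rightarrow> real"
  assumes "0 < \<delta>" and "\<delta> < 1"
    and "eventually (\<lambda>n. 1 \<le> m n \<and> real (m n) \<le> (1 - \<delta>) * real (NN n)) sequentially"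
    and "lam \<longlonglongrightarrow> 0"
  shows "(\<lambda>n. SUP k \<in> {k. k \<le> n - 1 \<and> measure_pmf.prob (Gnm n (m n)) {E. deg E 2 = k} > 0}.
            \<bar>measure_pmf.expectation (cond_pmf (Gnm n (m n)) {E. deg E 2 = k})
                 (\<lambda>E. exp (lam n * (real (deg E 1) - 2 * real (m n) / real n)))
             / measure_pmf.expectation (Gnm n (m n))
                 (\<lambda>E. exp (lam n * (real (deg E 1) - 2 * real (m n) / real n))) - 1\<bar>)
         \<longlonglongrightarrow> 0"
proof -
  define z where "z n = 4 / \<delta> * \<bar>exp (lam n) - 1\<bar>" for n
  have "z \<longlonglongrightarrow> 4 / \<delta> * \<bar>exp 0 - 1\<bar>"
    unfolding z_def by (intro tendsto_intros assms(4))
  then have z: "z \<longlonglongrightarrow> 0" by simp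
  have "(\<lambda>n. exp \<bar>lam n\<bar> / (1 - z n) - 1) \<longlonglongrightarrow> exp \<bar>0\<bar> / (1 - 0) - 1"
    by (intro tendsto_intros assms(4) z) simp
  then have bound: "(\<lambda>n. exp \<bar>lam n\<bar> / (1 - z n) - 1) \<longlonglongrightarrow> 0" by simp
  have "eventually (\<lambda>n. 2 + 4 / \<delta> \<le> real n) sequentially"
    using filterlim_real_sequentially by (simp add: filterlim_at_top)
  moreover have "eventually (\<lambda>n. z n < 1) sequentially"
    using order_tendstoD(2)[OF z] by simp
  ultimately have ev: "eventually (\<lambda>n. 2 + 4 / \<delta> \<le> real n \<and> z n < 1 \<and> real (m n) \<le> (1 - \<delta>) * real (NN n))
      sequentially"
    using assms(3) by eventually_elim simp
  show ?thesis
    by (rule tendsto_sandwich[OF _ _ tendsto_const bound])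
      (use ev Gnm_SUP_cond_mgf_relative_error[OF assms(1)] in \<open>auto elim!: eventually_mono simp: z_def\<close>)
qed

end
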